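(* Let $V=\mathbb{C}^6$ and let $\pi\subset\mathbb{P}(\wedge^2V)$ be a projective plane all of whose points have rank exactly four. Suppose that $\pi$ contains general lines, that the pivots of all general lines in $\pi$ pass through a common point of $\mathbb{P}(V)$, and that these pivots are not all equal. Then $\pi$ is $PGL_6$-equivalent to the plane $\pi_p$ spanned by $e_0\wedge e_3+e_1\wedge e_2$, $e_0\wedge e_4+e_2\wedge e_3$, $e_0\wedge e_5+e_1\wedge e_3$, where $e_0,\dots,e_5$ is a basis of $V$.
   Context: Elements of $\wedge^2\mathbb{C}^6$ are identified with skew-symmetric $6\times6$ matrices; rank means matrix rank. A projective line in $\mathbb{P}(\wedge^2V)$ all of whose points have rank four is called general if it is $PGL_6$-equivalent to the line spanned by $e_0\wedge e_2+e_1\wedge e_3$ and $e_0\wedge e_4+e_1\wedge e_5$. A general line $\ell$ is contained in $\mathbb{P}(W\wedge V)$ for a unique $2$-dimensional subspace $W\subset V$ (for the line above, $W=\langle e_0,e_1\rangle$); the projective line $\mathbb{P}(W)\subset\mathbb{P}(V)$ is called the pivot of $\ell$. Work over $\mathbb{C}$. *)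

theory Defs
  imports "HOL-Analysis.Analysis"
begin

type_synonym vec6 = "complex ^ 6"
type_synonym mat6 = "complex ^ 6 ^ 6"

text \<open>Elements of wedge^2 C^6 as skew-symmetric 6x6 complex matrices.\<close>

definition skew :: "mat6 \<Rightarrow> bool" where
  "skew A \<longleftrightarrow> transpose A = - A"

definition smat :: "complex \<Rightarrow> mat6 \<Rightarrow> mat6" where
  "smat c A = (\<chi> i j. c * A $ i $ j)"

definition wedge :: "vec6 \<Rightarrow> vec6 \<Rightarrow> mat6" where
  "wedge u v = (\<chi> i j. u $ i * v $ j - v $ i * u $ j)"

definition e :: "6 \<Rightarrow> vec6" where
  "e k = axis k 1"

definition span2 :: "mat6 \<Rightarrow> mat6 \<Rightarrow> mat6 set" where
  "span2 A B = {smat a A + smat b B | a b. True}"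

definition span3 :: "mat6 \<Rightarrow> mat6 \<Rightarrow> mat6 \<Rightarrow> mat6 set" where
  "span3 A B C = {smat a A + smat b B + smat c C | a b c. True}"

definition indep2 :: "mat6 \<Rightarrow> mat6 \<Rightarrow> bool" where
  "indep2 A B \<longleftrightarrow> (\<forall>a b. smat a A + smat b B = 0 \<longrightarrow> a = 0 \<and> b = 0)"

definition indep3 :: "mat6 \<Rightarrow> mat6 \<Rightarrow> mat6 \<Rightarrow> bool" where
  "indep3 A B C \<longleftrightarrow>
     (\<forall>a b c. smat a A + smat b B + smat c C = 0 \<longrightarrow> a = 0 \<and> b = 0 \<and> c = 0)"

text \<open>Projective lines / planes in P(wedge^2 V), represented by the
  corresponding 2- / 3-dimensional linear subspaces of skew matrices.\<close>
definition proj_line :: "mat6 set \<Rightarrow> bool" where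
  "proj_line L \<longleftrightarrow> (\<exists>A B. skew A \<and> skew B \<and> indep2 A B \<and> L = span2 A B)"

definition proj_plane :: "mat6 set \<Rightarrow> bool" where
  "proj_plane P \<longleftrightarrow>
     (\<exists>A B C. skew A \<and> skew B \<and> skew C \<and> indep3 A B C \<and> P = span3 A B C)"

definition all_rank4 :: "mat6 set \<Rightarrow> bool" where
  "all_rank4 S \<longleftrightarrow> (\<forall>A\<in>S. A \<noteq> 0 \<longrightarrow> rank A = 4)"

text \<open>Action of PGL_6 (represented by GL_6) on wedge^2 V: A \<mapsto> g A g^T.\<close>
definition act :: "mat6 \<Rightarrow> mat6 set \<Rightarrow> mat6 set" where
  "act g S = (\<lambda>A. g ** A ** transpose g) ` S"

definition pgl_equiv :: "mat6 set \<Rightarrow> mat6 set \<Rightarrow> bool" where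
  "pgl_equiv S T \<longleftrightarrow> (\<exists>g. invertible g \<and> act g S = T)"

definition line0 :: "mat6 set" where
  "line0 = span2 (wedge (e 0) (e 2) + wedge (e 1) (e 3))
                 (wedge (e 0) (e 4) + wedge (e 1) (e 5))"

definition general_line :: "mat6 set \<Rightarrow> bool" where
  "general_line L \<longleftrightarrow> proj_line L \<and> all_rank4 L \<and> pgl_equiv line0 L"

definition sub2 :: "vec6 set \<Rightarrow> bool" where
  "sub2 W \<longleftrightarrow> (\<exists>u w. (\<forall>a b. a *s u + b *s w = 0 \<longrightarrow> a = 0 \<and> b = 0)
                     \<and> W = {a *s u + b *s w | a b. True})"

definition wedgeV :: "vec6 set \<Rightarrow> mat6 set" where
  "wedgeV W = {A. \<exists>n w v. (\<forall>i<n. w i \<in> W) \<and> A = (\<Sum>i<(n::nat). wedge (w i) (v i))}"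

text \<open>W (i.e. the projective line P(W)) is the pivot of the general line L.\<close>
definition is_pivot :: "mat6 set \<Rightarrow> vec6 set \<Rightarrow> bool" where
  "is_pivot L W \<longleftrightarrow> sub2 W \<and> L \<subseteq> wedgeV W"

definition plane_p :: "mat6 set" where
  "plane_p = span3 (wedge (e 0) (e 3) + wedge (e 1) (e 2))
                   (wedge (e 0) (e 4) + wedge (e 2) (e 3))
                   (wedge (e 0) (e 5) + wedge (e 1) (e 3))"

end

theory Submission
  imports Defs
begin

text \<open>The rank condition is used only through two congruence-invariant consequences: the plane
  contains no nonzero decomposable tensor, and all its elements are singular.

  Move one general line to \<open>line0 = \<langle>e\<^sub>0\<and>e\<^sub>2 + e\<^sub>1\<and>e\<^sub>3, e\<^sub>0\<and>e\<^sub>4 + e\<^sub>1\<and>e\<^sub>5\<rangle>\<close>, whose pivot is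
  \<open>\<langle>e\<^sub>0, e\<^sub>1\<rangle>\<close>. A second general line, with pivot \<open>W \<noteq> \<langle>e\<^sub>0, e\<^sub>1\<rangle>\<close>, meets \<open>line0\<close> in some
  \<open>M \<noteq> 0\<close> because both lie in a plane. If \<open>p\<close> is the common point of the pivots and \<open>q \<in> W\<close> lies
  outside \<open>\<langle>e\<^sub>0, e\<^sub>1\<rangle>\<close>, the relation \<open>M \<and> p \<and> q = 0\<close> determines \<open>q\<close> modulo \<open>\<langle>e\<^sub>0, e\<^sub>1\<rangle>\<close> up to a
  scalar, and this is exactly what is needed for an element of the stabilizer of \<open>line0\<close> to move
  \<open>W\<close> to \<open>\<langle>e\<^sub>0, e\<^sub>3\<rangle>\<close>. The plane is then spanned by \<open>line0\<close> and some \<open>N \<in> \<langle>e\<^sub>0, e\<^sub>3\<rangle> \<and> V\<close>.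
  Singularity forces two more entries of \<open>N\<close> to vanish, the absence of decomposable tensors makes
  \<open>N\<^sub>3\<^sub>5\<close> and a quadratic expression in the entries nonzero, and an explicit change of basis then
  carries the plane to \<open>plane_p\<close>.\<close>

section \<open>Coordinates and skew matrices\<close>

lemma exhaust_6: fixes x :: 6 shows "x = 0 \<or> x = 1 \<or> x = 2 \<or> x = 3 \<or> x = 4 \<or> x = 5"
proof (induct x)
  case (of_int z)
  then have "z = 0 \<or> z = 1 \<or> z = 2 \<or> z = 3 \<or> z = 4 \<or> z = 5" by fastforce
  then show ?case by auto
qed

lemma UNIV_6: "(UNIV :: 6 set) = {0, 1, 2, 3, 4, 5}"
  using exhaust_6 by auto

lemma sum_UNIV_6: "sum f (UNIV :: 6 set) = f 0 + f 1 + f 2 + f 3 + f 4 + f 5"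
  unfolding UNIV_6 by (simp add: add.assoc)

lemma all_6: "(\<forall>i :: 6. P i) \<longleftrightarrow> P 0 \<and> P 1 \<and> P 2 \<and> P 3 \<and> P 4 \<and> P 5"
  by (metis exhaust_6)

lemma smat_nth [simp]: "smat c A $ i $ j = c * A $ i $ j"
  by (simp add: smat_def)

lemma smat_0 [simp]: "smat 0 A = 0" and smat_1 [simp]: "smat 1 A = A"
  by (simp_all add: vec_eq_iff)

lemma wedge_nth [simp]: "wedge u v $ i $ j = u $ i * v $ j - v $ i * u $ j"
  by (simp add: wedge_def)

lemma e_nth [simp]: "e k $ i = (if i = k then 1 else 0)"
  by (simp add: e_def axis_def)

lemma e_nonzero: "e k \<noteq> 0"
  by (metis e_nth one_neq_zero zero_index)

lemma skew_iff_nth: "skew A \<longleftrightarrow> (\<forall>i j. A $ j $ i = - A $ i $ j)"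
  by (auto simp: skew_def vec_eq_iff transpose_def)

lemma skew_nth: "skew A \<Longrightarrow> A $ j $ i = - A $ i $ j"
  unfolding skew_iff_nth by blast

lemma skew_diag: "skew A \<Longrightarrow> A $ i $ i = 0"
  using skew_nth[of A i i] by simp

lemma skew_wedge: "skew (wedge u v)"
  by (simp add: skew_iff_nth)

lemma skew_add:
  assumes "skew A" "skew B" shows "skew (A + B)"
proof -
  have "transpose (A + B) = transpose A + transpose B"
    by (simp add: transpose_def vec_eq_iff)
  then show ?thesis using assms by (simp add: skew_def)
qed

lemma skew_smat:
  assumes "skew A" shows "skew (smat c A)"
proof -
  have "transpose (smat c A) = smat c (transpose A)" "smat c (- A) = - smat c A"
    by (simp_all add: transpose_def vec_eq_iff)
  then show ?thesis using assms by (simp add: skew_def)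
qed

lemma skew_eqI:
  assumes "skew A" "skew B"
    and "A$0$1 = B$0$1" "A$0$2 = B$0$2" "A$0$3 = B$0$3" "A$0$4 = B$0$4" "A$0$5 = B$0$5"
      "A$1$2 = B$1$2" "A$1$3 = B$1$3" "A$1$4 = B$1$4" "A$1$5 = B$1$5"
      "A$2$3 = B$2$3" "A$2$4 = B$2$4" "A$2$5 = B$2$5"
      "A$3$4 = B$3$4" "A$3$5 = B$3$5" "A$4$5 = B$4$5"
  shows "A = B"
proof -
  have "\<forall>i j. A $ i $ j = B $ i $ j"
    unfolding all_6 using assms skew_diag[OF assms(1)] skew_diag[OF assms(2)]
      skew_nth[OF assms(1), of 1 0] skew_nth[OF assms(2), of 1 0]
      skew_nth[OF assms(1), of 2 0] skew_nth[OF assms(2), of 2 0]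
      skew_nth[OF assms(1), of 3 0] skew_nth[OF assms(2), of 3 0]
      skew_nth[OF assms(1), of 4 0] skew_nth[OF assms(2), of 4 0]
      skew_nth[OF assms(1), of 5 0] skew_nth[OF assms(2), of 5 0]
      skew_nth[OF assms(1), of 2 1] skew_nth[OF assms(2), of 2 1]
      skew_nth[OF assms(1), of 3 1] skew_nth[OF assms(2), of 3 1]
      skew_nth[OF assms(1), of 4 1] skew_nth[OF assms(2), of 4 1]
      skew_nth[OF assms(1), of 5 1] skew_nth[OF assms(2), of 5 1]
      skew_nth[OF assms(1), of 3 2] skew_nth[OF assms(2), of 3 2]
      skew_nth[OF assms(1), of 4 2] skew_nth[OF assms(2), of 4 2]
      skew_nth[OF assms(1), of 5 2] skew_nth[OF assms(2), of 5 2]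
      skew_nth[OF assms(1), of 4 3] skew_nth[OF assms(2), of 4 3]
      skew_nth[OF assms(1), of 5 3] skew_nth[OF assms(2), of 5 3]
      skew_nth[OF assms(1), of 5 4] skew_nth[OF assms(2), of 5 4]
    by simp
  then show ?thesis by (simp add: vec_eq_iff)
qed

definition cols6 :: "vec6 \<Rightarrow> vec6 \<Rightarrow> vec6 \<Rightarrow> vec6 \<Rightarrow> vec6 \<Rightarrow> vec6 \<Rightarrow> mat6" where
  "cols6 f0 f1 f2 f3 f4 f5 = (\<chi> i j. (if j = 0 then f0 else if j = 1 then f1 else if j = 2 then f2
     else if j = 3 then f3 else if j = 4 then f4 else f5) $ i)"

lemma cols6_mult:
  "cols6 f0 f1 f2 f3 f4 f5 *v z
     = z$0 *s f0 + z$1 *s f1 + z$2 *s f2 + z$3 *s f3 + z$4 *s f4 + z$5 *s f5"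
  by (simp add: cols6_def matrix_vector_mult_def sum_UNIV_6 vec_eq_iff algebra_simps)

lemma cols6_mult_e:
  "cols6 f0 f1 f2 f3 f4 f5 *v e 0 = f0" "cols6 f0 f1 f2 f3 f4 f5 *v e 1 = f1"
  "cols6 f0 f1 f2 f3 f4 f5 *v e 2 = f2" "cols6 f0 f1 f2 f3 f4 f5 *v e 3 = f3"
  "cols6 f0 f1 f2 f3 f4 f5 *v e 4 = f4" "cols6 f0 f1 f2 f3 f4 f5 *v e 5 = f5"
  by (simp_all add: cols6_mult)

lemma cols6_invertible:
  assumes "\<And>z :: vec6.
    z$0 *s f0 + z$1 *s f1 + z$2 *s f2 + z$3 *s f3 + z$4 *s f4 + z$5 *s f5 = 0 \<Longrightarrow> z = 0"
  shows "invertible (cols6 f0 f1 f2 f3 f4 f5)"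
  using assms unfolding invertible_left_inverse matrix_left_invertible_ker cols6_mult by blast

lemma cramer2_zero:
  fixes a b c d x y :: "'a::field"
  assumes "a * d - b * c \<noteq> 0" "a * x + b * y = 0" "c * x + d * y = 0"
  shows "x = 0" "y = 0"
proof -
  have "(a * d - b * c) * x = d * (a * x + b * y) - b * (c * x + d * y)"
    "(a * d - b * c) * y = a * (c * x + d * y) - c * (a * x + b * y)"
    by (simp_all add: algebra_simps)
  then show "x = 0" "y = 0" using assms by simp_all
qed

lemma exists_det_eq_1:
  fixes x y :: "'a::field"
  assumes "x \<noteq> 0 \<or> y \<noteq> 0"
  obtains s t where "x * t - y * s = 1"
proof (cases "x = 0")
  case True
  with assms have "y \<noteq> 0" by simp
  then show ?thesis using True by (intro that[where s = "- 1 / y" and t = 0]) simp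
next
  case False
  then show ?thesis by (intro that[where s = 0 and t = "1 / x"]) simp
qed

lemma proportional_on:
  fixes x y :: "'a::field^'n"
  assumes "\<And>k l. k \<in> S \<Longrightarrow> l \<in> S \<Longrightarrow> x$l * y$k = x$k * y$l" "k0 \<in> S" "y$k0 \<noteq> 0"
  shows "\<And>l. l \<in> S \<Longrightarrow> x$l = x$k0 / y$k0 * y$l"
  using assms by (simp add: field_simps)

section \<open>The congruence action of \<open>GL\<^sub>6\<close>\<close>

abbreviation congr :: "'a::comm_semiring_1^'n^'n \<Rightarrow> 'a^'n^'n \<Rightarrow> 'a^'n^'n" where
  "congr g A \<equiv> g ** A ** transpose g"

lemma congr_nth:
  fixes G A :: "'a::comm_semiring_1^'n^'n"
  shows "congr G A $ i $ j = (\<Sum>k\<in>UNIV. \<Sum>l\<in>UNIV. G$i$k * A$k$l * G$j$l)"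
  by (simp add: matrix_matrix_mult_def transpose_def sum_distrib_left sum_distrib_right
      mult.assoc mult.commute mult.left_commute) (rule sum.swap)

lemma congr_add:
  fixes G A B :: "'a::comm_semiring_1^'n^'n"
  shows "congr G (A + B) = congr G A + congr G B"
  by (simp add: vec_eq_iff congr_nth sum.distrib distrib_left distrib_right)

lemma congr_zero: "congr G (0 :: 'a::comm_semiring_1^'n^'n) = 0"
  by (simp add: vec_eq_iff congr_nth)

lemma congr_sum:
  fixes G :: "'a::comm_semiring_1^'n^'n"
  shows "congr G (\<Sum>i<(n::nat). A i) = (\<Sum>i<n. congr G (A i))"
  by (induct n) (simp_all add: congr_add congr_zero)

lemma congr_congr:
  fixes G H X :: "'a::comm_semiring_1^'n^'n"
  shows "congr G (congr H X) = congr (G ** H) X"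
  by (simp only: matrix_mul_assoc matrix_transpose_mul)

lemma congr_mat_1:
  fixes X :: "'a::comm_semiring_1^'n^'n"
  shows "congr (mat 1) X = X"
  by (simp add: transpose_mat)

lemma congr_cancel:
  fixes G H X :: "'a::comm_semiring_1^'n^'n"
  assumes "H ** G = mat 1"
  shows "congr H (congr G X) = X"
  by (simp only: congr_congr assms congr_mat_1)

lemma congr_inj:
  fixes G H A B :: "'a::comm_semiring_1^'n^'n"
  assumes "H ** G = mat 1" "congr G A = congr G B"
  shows "A = B"
  by (metis assms congr_cancel)

lemma congr_smat: "congr G (smat c A) = smat c (congr G A)"
  by (simp add: vec_eq_iff congr_nth sum_distrib_left mult.assoc mult.left_commute)

lemma congr_wedge: "congr G (wedge u v) = wedge (G *v u) (G *v v)"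
proof -
  have "congr G (wedge u v) $ i $ j = wedge (G *v u) (G *v v) $ i $ j" for i j
  proof -
    have "congr G (wedge u v) $ i $ j
        = (\<Sum>k\<in>UNIV. \<Sum>l\<in>UNIV. G$i$k * u$k * (G$j$l * v$l) - G$i$k * v$k * (G$j$l * u$l))"
      unfolding congr_nth wedge_nth by (intro sum.cong refl) (simp add: algebra_simps)
    also have "\<dots> = wedge (G *v u) (G *v v) $ i $ j"
      by (simp add: matrix_vector_mult_def sum_product sum_subtractf)
    finally show ?thesis .
  qed
  then show ?thesis by (simp add: vec_eq_iff)
qed

lemma skew_congr:
  assumes "skew A" shows "skew (congr G A)"
proof -
  have "M ** (- N) = - (M ** N)" "(- N) ** M = - (N ** M)" for M N :: mat6
    by (simp_all add: vec_eq_iff matrix_matrix_mult_def sum_negf)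
  then show ?thesis
    using assms by (simp add: skew_def matrix_transpose_mul matrix_mul_assoc)
qed

lemma act_act: "act G (act H S) = act (G ** H) S"
  unfolding act_def image_image congr_congr ..

lemma act_cancel: "H ** G = mat 1 \<Longrightarrow> act H (act G S) = S"
  unfolding act_act by (simp add: act_def congr_mat_1)

lemma act_span3: "act G (span3 A B C) = span3 (congr G A) (congr G B) (congr G C)"
proof -
  have h: "congr G (smat a A + smat b B + smat c C)
      = smat a (congr G A) + smat b (congr G B) + smat c (congr G C)" for a b c
    by (simp add: congr_add congr_smat)
  show ?thesis
  proof (intro equalityI subsetI)
    fix X assume "X \<in> act G (span3 A B C)"
    then obtain a b c where "X = congr G (smat a A + smat b B + smat c C)"
      unfolding act_def span3_def by blast
    then show "X \<in> span3 (congr G A) (congr G B) (congr G C)"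
      unfolding h span3_def by blast
  next
    fix X assume "X \<in> span3 (congr G A) (congr G B) (congr G C)"
    then obtain a b c where "X = congr G (smat a A + smat b B + smat c C)"
      unfolding h span3_def by blast
    then show "X \<in> act G (span3 A B C)"
      unfolding act_def span3_def by blast
  qed
qed

lemma indep2_congr:
  assumes "H ** G = mat 1" "indep2 A B"
  shows "indep2 (congr G A) (congr G B)"
  unfolding indep2_def
proof (intro allI impI)
  fix a b assume "smat a (congr G A) + smat b (congr G B) = 0"
  then have "congr G (smat a A + smat b B) = congr G 0"
    by (simp add: congr_add congr_smat congr_zero)
  then have "smat a A + smat b B = 0" using congr_inj[OF assms(1)] by blast
  then show "a = 0 \<and> b = 0" using assms(2) unfolding indep2_def by blast
qed

lemma indep3_congr:
  assumes "H ** G = mat 1" "indep3 A B C"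
  shows "indep3 (congr G A) (congr G B) (congr G C)"
  unfolding indep3_def
proof (intro allI impI)
  fix a b c assume "smat a (congr G A) + smat b (congr G B) + smat c (congr G C) = 0"
  then have "congr G (smat a A + smat b B + smat c C) = congr G 0"
    by (simp add: congr_add congr_smat congr_zero)
  then have "smat a A + smat b B + smat c C = 0" using congr_inj[OF assms(1)] by blast
  then show "a = 0 \<and> b = 0 \<and> c = 0" using assms(2) unfolding indep3_def by blast
qed

lemma act_wedgeV: "act G (wedgeV W) \<subseteq> wedgeV ((*v) G ` W)"
proof
  fix Y assume "Y \<in> act G (wedgeV W)"
  then obtain n w v where w: "\<forall>i<n. w i \<in> W"
    and Y: "Y = congr G (\<Sum>i<(n::nat). wedge (w i) (v i))"
    unfolding act_def wedgeV_def by blast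
  have "Y = (\<Sum>i<n. wedge (G *v w i) (G *v v i))"
    using Y by (simp add: congr_sum congr_wedge)
  then show "Y \<in> wedgeV ((*v) G ` W)"
    using w unfolding wedgeV_def mem_Collect_eq
    by (intro exI[of _ n] exI[of _ "\<lambda>i. G *v w i"] exI[of _ "\<lambda>i. G *v v i"]) simp
qed

lemma proj_plane_act:
  assumes "invertible g" "proj_plane P" shows "proj_plane (act g P)"
proof -
  obtain h where "h ** g = mat 1" using assms(1) invertible_left_inverse by blast
  then show ?thesis
    using assms(2) unfolding proj_plane_def
    by (metis act_span3 indep3_congr skew_congr)
qed

lemma pgl_equiv_act: "invertible g \<Longrightarrow> pgl_equiv S (act g S)"
  unfolding pgl_equiv_def by blast

lemma pgl_equiv_sym:
  assumes "pgl_equiv S T" shows "pgl_equiv T S"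
proof -
  obtain g h where "act g S = T" "g ** h = mat 1" "h ** g = mat 1"
    using assms unfolding pgl_equiv_def invertible_def by blast
  then show ?thesis
    unfolding pgl_equiv_def invertible_def using act_cancel by blast
qed

lemma pgl_equiv_trans:
  assumes "pgl_equiv R S" "pgl_equiv S T" shows "pgl_equiv R T"
  using assms unfolding pgl_equiv_def by (metis act_act invertible_mult)

section \<open>Planes of rank four\<close>

lemma dependent_4_in_dim_3:
  fixes v1 v2 v3 v4 :: "'a::field^3"
  shows "\<exists>c1 c2 c3 c4. (c1 \<noteq> 0 \<or> c2 \<noteq> 0 \<or> c3 \<noteq> 0 \<or> c4 \<noteq> 0) \<and>
           c1 *s v1 + c2 *s v2 + c3 *s v3 + c4 *s v4 = 0"
proof (cases "distinct [v1, v2, v3, v4]")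
  case True
  let ?S = "{v1, v2, v3, v4}"
  have "vec.dim ?S \<le> vec.dim (UNIV :: ('a^3) set)" by (rule vec.dim_subset) simp
  also have "\<dots> = 3" by (simp only: vec_dim_card) simp
  finally have "vec.dependent ?S"
    using True by (intro vec.dependent_biggerset_general) simp
  then obtain u where u: "\<exists>v\<in>?S. u v \<noteq> 0" "(\<Sum>v\<in>?S. u v *s v) = 0"
    using vec.dependent_finite[of ?S] by auto
  have "(\<Sum>v\<in>?S. u v *s v) = u v1 *s v1 + u v2 *s v2 + u v3 *s v3 + u v4 *s v4"
    using True by (simp add: add.assoc)
  then show ?thesis
    using u by (intro exI[of _ "u v1"] exI[of _ "u v2"] exI[of _ "u v3"] exI[of _ "u v4"]) auto
next
  case False
  then consider "v1 = v2" | "v1 = v3" | "v1 = v4" | "v2 = v3" | "v2 = v4" | "v3 = v4"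
    by fastforce
  then show ?thesis
  proof cases
    case 1 then show ?thesis by (intro exI[of _ 1] exI[of _ "-1"] exI[of _ 0] exI[of _ 0]) simp
  next
    case 2 then show ?thesis by (intro exI[of _ 1] exI[of _ 0] exI[of _ "-1"] exI[of _ 0]) simp
  next
    case 3 then show ?thesis by (intro exI[of _ 1] exI[of _ 0] exI[of _ 0] exI[of _ "-1"]) simp
  next
    case 4 then show ?thesis by (intro exI[of _ 0] exI[of _ 1] exI[of _ "-1"] exI[of _ 0]) simp
  next
    case 5 then show ?thesis by (intro exI[of _ 0] exI[of _ 1] exI[of _ 0] exI[of _ "-1"]) simp
  next
    case 6 then show ?thesis by (intro exI[of _ 0] exI[of _ 0] exI[of _ 1] exI[of _ "-1"]) simp
  qed
qed

definition lincomb3 :: "mat6 \<Rightarrow> mat6 \<Rightarrow> mat6 \<Rightarrow> complex^3 \<Rightarrow> mat6" where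
  "lincomb3 A B C x = smat (x$1) A + smat (x$2) B + smat (x$3) C"

lemma lincomb3_linear:
  "smat c1 (lincomb3 A B C x1) + smat c2 (lincomb3 A B C x2)
     + smat c3 (lincomb3 A B C x3) + smat c4 (lincomb3 A B C x4)
   = lincomb3 A B C (c1 *s x1 + c2 *s x2 + c3 *s x3 + c4 *s x4)"
  by (simp add: lincomb3_def vec_eq_iff algebra_simps)

lemma lincomb3_0: "lincomb3 A B C 0 = 0"
  by (simp add: lincomb3_def vec_eq_iff)

lemma span3_memI: "smat a A + smat b B + smat c C \<in> span3 A B C"
  unfolding span3_def by blast

lemma span3_lincomb3:
  assumes "X \<in> span3 A B C" obtains x where "X = lincomb3 A B C x"
proof -
  obtain a b c where "X = smat a A + smat b B + smat c C"
    using assms unfolding span3_def by blast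
  then have "X = lincomb3 A B C (vector [a, b, c])" by (simp add: lincomb3_def)
  then show ?thesis using that by blast
qed

lemma span3_dependent_4:
  assumes "X \<in> span3 A B C" "Y \<in> span3 A B C" "Z \<in> span3 A B C" "W \<in> span3 A B C"
  shows "\<exists>c1 c2 c3 c4. (c1 \<noteq> 0 \<or> c2 \<noteq> 0 \<or> c3 \<noteq> 0 \<or> c4 \<noteq> 0) \<and>
           smat c1 X + smat c2 Y + smat c3 Z + smat c4 W = 0"
proof -
  obtain x y z w where xyzw: "X = lincomb3 A B C x" "Y = lincomb3 A B C y"
    "Z = lincomb3 A B C z" "W = lincomb3 A B C w"
    using span3_lincomb3 assms by metis
  obtain c1 c2 c3 c4 where c: "c1 \<noteq> 0 \<or> c2 \<noteq> 0 \<or> c3 \<noteq> 0 \<or> c4 \<noteq> 0"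
    "c1 *s x + c2 *s y + c3 *s z + c4 *s w = 0"
    using dependent_4_in_dim_3[of x y z w] by blast
  have "smat c1 X + smat c2 Y + smat c3 Z + smat c4 W = 0"
    unfolding xyzw lincomb3_linear c(2) lincomb3_0 ..
  then show ?thesis using c(1) by blast
qed

lemma span3_closed:
  assumes "X \<in> span3 A B C" "Y \<in> span3 A B C" "Z \<in> span3 A B C"
  shows "smat a X + smat b Y + smat c Z \<in> span3 A B C"
proof -
  obtain x y z where xyz: "X = lincomb3 A B C x" "Y = lincomb3 A B C y" "Z = lincomb3 A B C z"
    using span3_lincomb3 assms by metis
  have "smat a X + smat b Y + smat c Z = smat a X + smat b Y + smat c Z + smat 0 X"
    by (simp add: vec_eq_iff)
  also have "\<dots> = lincomb3 A B C (a *s x + b *s y + c *s z + 0 *s x)"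
    unfolding xyz lincomb3_linear ..
  finally show ?thesis unfolding lincomb3_def by (simp only: span3_memI)
qed

lemma span3_eq:
  assumes "X \<in> span3 A B C" "Y \<in> span3 A B C" "Z \<in> span3 A B C" "indep3 X Y Z"
  shows "span3 X Y Z = span3 A B C"
proof
  show "span3 X Y Z \<subseteq> span3 A B C"
    using span3_closed[OF assms(1-3)] unfolding span3_def by blast
next
  show "span3 A B C \<subseteq> span3 X Y Z"
  proof
    fix W assume W: "W \<in> span3 A B C"
    obtain c1 c2 c3 c4 where c: "c1 \<noteq> 0 \<or> c2 \<noteq> 0 \<or> c3 \<noteq> 0 \<or> c4 \<noteq> 0"
      "smat c1 X + smat c2 Y + smat c3 Z + smat c4 W = 0"
      using span3_dependent_4[OF assms(1-3) W] by blast
    have "c4 \<noteq> 0"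
    proof
      assume "c4 = 0"
      then have "smat c1 X + smat c2 Y + smat c3 Z = 0" using c(2) by (simp add: vec_eq_iff)
      then show False using assms(4) c(1) \<open>c4 = 0\<close> unfolding indep3_def by blast
    qed
    have "W $ i $ j = (smat (- c1 / c4) X + smat (- c2 / c4) Y + smat (- c3 / c4) Z) $ i $ j"
      for i j
    proof -
      have "c1 * X$i$j + c2 * Y$i$j + c3 * Z$i$j + c4 * W$i$j = 0"
        using arg_cong[OF c(2), of "\<lambda>M. M $ i $ j"] by simp
      then show ?thesis using \<open>c4 \<noteq> 0\<close> by (simp add: field_simps) algebra
    qed
    then have "W = smat (- c1 / c4) X + smat (- c2 / c4) Y + smat (- c3 / c4) Z"
      by (simp add: vec_eq_iff)
    then show "W \<in> span3 X Y Z" by (simp only: span3_memI)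
  qed
qed

lemma span3_meets_span2:
  assumes "X1 \<in> span3 A B C" "X2 \<in> span3 A B C" "Y1 \<in> span3 A B C" "Y2 \<in> span3 A B C"
    and "indep2 Y1 Y2"
  obtains a b c d where "a \<noteq> 0 \<or> b \<noteq> 0" "smat a X1 + smat b X2 = smat c Y1 + smat d Y2"
proof -
  obtain c1 c2 c3 c4 where c: "c1 \<noteq> 0 \<or> c2 \<noteq> 0 \<or> c3 \<noteq> 0 \<or> c4 \<noteq> 0"
    "smat c1 X1 + smat c2 X2 + smat c3 Y1 + smat c4 Y2 = 0"
    using span3_dependent_4[OF assms(1-4)] by blast
  have "(smat c1 X1 + smat c2 X2) $ i $ j = (smat (- c3) Y1 + smat (- c4) Y2) $ i $ j" for i j
  proof -
    have "c1 * X1$i$j + c2 * X2$i$j + c3 * Y1$i$j + c4 * Y2$i$j = 0"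
      using arg_cong[OF c(2), of "\<lambda>M. M $ i $ j"] by simp
    then show ?thesis by simp algebra
  qed
  then have eq: "smat c1 X1 + smat c2 X2 = smat (- c3) Y1 + smat (- c4) Y2"
    by (simp add: vec_eq_iff)
  have "c1 \<noteq> 0 \<or> c2 \<noteq> 0"
  proof (rule ccontr)
    assume "\<not> (c1 \<noteq> 0 \<or> c2 \<noteq> 0)"
    then have "smat (- c3) Y1 + smat (- c4) Y2 = 0" using eq by (simp add: vec_eq_iff)
    then have "- c3 = 0 \<and> - c4 = 0" using assms(5) unfolding indep2_def by blast
    then show False using c(1) \<open>\<not> (c1 \<noteq> 0 \<or> c2 \<noteq> 0)\<close> by simp
  qed
  with eq show ?thesis using that by blast
qed

lemma indep3_of_notin_span2:
  assumes "indep2 A B" "N \<notin> span2 A B" shows "indep3 A B N"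
  unfolding indep3_def
proof (intro allI impI)
  fix a b c assume h: "smat a A + smat b B + smat c N = 0"
  have "c = 0"
  proof (rule ccontr)
    assume "c \<noteq> 0"
    have "N = smat (- a / c) A + smat (- b / c) B"
    proof -
      have "N $ i $ j = - a / c * A $ i $ j + - b / c * B $ i $ j" for i j
      proof -
        have "a * A$i$j + b * B$i$j + c * N$i$j = 0"
          using arg_cong[OF h, of "\<lambda>M. M $ i $ j"] by simp
        then show ?thesis using \<open>c \<noteq> 0\<close> by (simp add: field_simps) algebra
      qed
      then show ?thesis by (simp add: vec_eq_iff)
    qed
    then show False using assms(2) unfolding span2_def by blast
  qed
  with h have "smat a A + smat b B = 0" by simp
  then show "a = 0 \<and> b = 0 \<and> c = 0" using assms(1) \<open>c = 0\<close> unfolding indep2_def by blast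
qed

lemma skew_span3:
  assumes "skew A" "skew B" "skew C" "X \<in> span3 A B C" shows "skew X"
proof -
  obtain a b c where "X = smat a A + smat b B + smat c C"
    using assms(4) unfolding span3_def by blast
  then show ?thesis by (simp add: skew_add skew_smat assms(1-3))
qed

lemma rank_wedge_le_2: "rank (wedge a b) \<le> 2"
proof -
  have "rows (wedge a b) \<subseteq> vec.span {a, b}"
  proof
    fix r assume "r \<in> rows (wedge a b)"
    then obtain i where r: "r = row i (wedge a b)" by (auto simp: rows_def)
    have "r = (a $ i) *s b + (- (b $ i)) *s a"
      by (simp add: r row_def vec_eq_iff algebra_simps)
    then show "r \<in> vec.span {a, b}"
      by (metis add.commute insertCI vec.span_add vec.span_base vec.span_scale)
  qed
  then have "vec.dim (rows (wedge a b)) \<le> card {a, b}" by (rule vec.dim_le_card) simp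
  also have "\<dots> \<le> 2" by (simp add: card_insert_le_m1)
  finally show ?thesis by (simp add: row_rank_def_gen)
qed

lemma rank_eq_card_if_injective:
  fixes X :: "'a::field^'n^'n"
  assumes "\<forall>z. X *v z = 0 \<longrightarrow> z = 0"
  shows "rank X = CARD('n)"
proof -
  have "vec.span (rows X) = UNIV"
    using assms matrix_left_invertible_ker matrix_left_invertible_span_rows_gen by blast
  then have "vec.dim (rows X) = vec.dim (UNIV :: ('a^'n) set)" by (metis vec.dim_span)
  moreover have "vec.dim (UNIV :: ('a^'n) set) = CARD('n)" by (rule vec_dim_card)
  ultimately show ?thesis by (simp only: row_rank_def_gen)
qed

definition wedge_free :: "mat6 set \<Rightarrow> bool" where
  "wedge_free P \<longleftrightarrow> (\<forall>a b. wedge a b \<in> P \<longrightarrow> wedge a b = 0)"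

definition all_singular :: "mat6 set \<Rightarrow> bool" where
  "all_singular P \<longleftrightarrow> (\<forall>X\<in>P. \<exists>z. z \<noteq> 0 \<and> X *v z = 0)"

text \<open>Skew matrices have even rank, so on a plane of skew matrices these two conditions say
  exactly that every nonzero element has rank four; unlike the rank they are evidently
  invariant under congruence.\<close>

definition rank4_plane :: "mat6 set \<Rightarrow> bool" where
  "rank4_plane P \<longleftrightarrow> proj_plane P \<and> wedge_free P \<and> all_singular P"

lemma all_rank4_wedge_free:
  assumes "all_rank4 P" shows "wedge_free P"
  unfolding wedge_free_def
proof (intro allI impI)
  fix a b assume "wedge a b \<in> P"
  with assms have "wedge a b \<noteq> 0 \<Longrightarrow> rank (wedge a b) = 4" unfolding all_rank4_def by blast
  then show "wedge a b = 0" using rank_wedge_le_2[of a b] by fastforce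
qed

lemma all_rank4_all_singular:
  assumes "all_rank4 P" shows "all_singular P"
  unfolding all_singular_def
proof
  fix X assume X: "X \<in> P"
  show "\<exists>z. z \<noteq> 0 \<and> X *v z = 0"
  proof (rule ccontr)
    assume "\<nexists>z. z \<noteq> 0 \<and> X *v z = 0"
    then have "rank X = 6" using rank_eq_card_if_injective[of X] by auto
    moreover have "X \<noteq> 0"
      using \<open>\<nexists>z. z \<noteq> 0 \<and> X *v z = 0\<close> e_nonzero by fastforce
    ultimately show False using assms X unfolding all_rank4_def by auto
  qed
qed

lemma wedge_free_act:
  assumes "invertible g" "wedge_free P" shows "wedge_free (act g P)"
  unfolding wedge_free_def
proof (intro allI impI)
  fix a b assume "wedge a b \<in> act g P"
  then obtain X where X: "X \<in> P" "wedge a b = congr g X" unfolding act_def by auto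
  obtain h where h: "h ** g = mat 1" using assms(1) invertible_left_inverse by blast
  have "X = wedge (h *v a) (h *v b)" using X(2) congr_cancel[OF h] by (metis congr_wedge)
  then have "X = 0" using assms(2) X(1) unfolding wedge_free_def by blast
  then show "wedge a b = 0" using X(2) by (simp add: congr_zero)
qed

lemma all_singular_act:
  assumes "invertible g" "all_singular P" shows "all_singular (act g P)"
  unfolding all_singular_def
proof
  fix Y assume "Y \<in> act g P"
  then obtain X where X: "X \<in> P" "Y = congr g X" unfolding act_def by auto
  obtain z where z: "z \<noteq> 0" "X *v z = 0" using assms(2) X(1) unfolding all_singular_def by blast
  obtain h where h: "g ** h = mat 1" "h ** g = mat 1"
    using assms(1) unfolding invertible_def by blast
  have th: "transpose g ** transpose h = mat 1"
    by (simp only: h(2) transpose_mat flip: matrix_transpose_mul)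
  have "Y *v (transpose h *v z) = g *v (X *v z)"
    by (simp only: X(2) matrix_vector_mul_assoc th matrix_mul_rid flip: matrix_mul_assoc)
  moreover have "transpose h *v z \<noteq> 0"
    using z(1) th
    by (metis matrix_vector_mul_assoc matrix_vector_mul_lid matrix_vector_mult_0_right)
  ultimately show "\<exists>w. w \<noteq> 0 \<and> Y *v w = 0" using z(2) by auto
qed

lemma rank4_planeI: "proj_plane P \<Longrightarrow> all_rank4 P \<Longrightarrow> rank4_plane P"
  by (simp add: rank4_plane_def all_rank4_wedge_free all_rank4_all_singular)

lemma rank4_plane_act: "invertible g \<Longrightarrow> rank4_plane P \<Longrightarrow> rank4_plane (act g P)"
  by (simp add: rank4_plane_def proj_plane_act wedge_free_act all_singular_act)

lemma rank4_plane_skew: "rank4_plane Q \<Longrightarrow> X \<in> Q \<Longrightarrow> skew X"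
  unfolding rank4_plane_def proj_plane_def using skew_span3 by blast

lemma rank4_plane_span3:
  assumes "rank4_plane Q" "X \<in> Q" "Y \<in> Q" "Z \<in> Q" "indep3 X Y Z"
  shows "Q = span3 X Y Z"
proof -
  obtain A B C where Q: "Q = span3 A B C"
    using assms(1) unfolding rank4_plane_def proj_plane_def by blast
  show ?thesis using span3_eq[of X A B C Y Z] assms(2-5) unfolding Q by blast
qed

section \<open>Pivots\<close>

definition vspan2 :: "vec6 \<Rightarrow> vec6 \<Rightarrow> vec6 set" where
  "vspan2 u w = {c *s u + d *s w | c d. True}"

definition vindep2 :: "vec6 \<Rightarrow> vec6 \<Rightarrow> bool" where
  "vindep2 u w \<longleftrightarrow> (\<forall>a b. a *s u + b *s w = 0 \<longrightarrow> a = 0 \<and> b = 0)"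

lemma sub2_iff: "sub2 W \<longleftrightarrow> (\<exists>u w. vindep2 u w \<and> W = vspan2 u w)"
  unfolding sub2_def vindep2_def vspan2_def ..

lemma vspan2_closed:
  assumes "x \<in> vspan2 u w" "y \<in> vspan2 u w" shows "\<alpha> *s x + \<beta> *s y \<in> vspan2 u w"
proof -
  obtain c1 d1 c2 d2 where "x = c1 *s u + d1 *s w" "y = c2 *s u + d2 *s w"
    using assms unfolding vspan2_def by blast
  then have "\<alpha> *s x + \<beta> *s y = (\<alpha> * c1 + \<beta> * c2) *s u + (\<alpha> * d1 + \<beta> * d2) *s w"
    by (simp add: vec_eq_iff algebra_simps)
  then show ?thesis unfolding vspan2_def by blast
qed

lemma vspan2_left: "u \<in> vspan2 u w"
  unfolding vspan2_def by (rule CollectI, rule exI[of _ 1], rule exI[of _ 0]) simp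

lemma vspan2_right: "w \<in> vspan2 u w"
  unfolding vspan2_def by (rule CollectI, rule exI[of _ 0], rule exI[of _ 1]) simp

lemma vspan2_subset: "p \<in> vspan2 u w \<Longrightarrow> q \<in> vspan2 u w \<Longrightarrow> vspan2 p q \<subseteq> vspan2 u w"
  by (auto simp: vspan2_def[of p q] intro: vspan2_closed)

lemma image_vspan2: "(*v) G ` vspan2 u w = vspan2 (G *v u) (G *v w)"
proof -
  have "G *v (c *s u + d *s w) = c *s (G *v u) + d *s (G *v w)" for c d
    by (simp add: matrix_vector_right_distrib vector_scalar_commute)
  then show ?thesis unfolding vspan2_def by (auto intro!: image_eqI)
qed

lemma vindep2_image:
  assumes "H ** G = mat 1" "vindep2 u w" shows "vindep2 (G *v u) (G *v w)"
  unfolding vindep2_def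
proof (intro allI impI)
  fix a b assume "a *s (G *v u) + b *s (G *v w) = 0"
  then have "H *v (G *v (a *s u + b *s w)) = 0"
    by (simp add: matrix_vector_right_distrib vector_scalar_commute)
  then have "a *s u + b *s w = 0"
    by (simp only: matrix_vector_mul_assoc assms(1) matrix_vector_mul_lid)
  then show "a = 0 \<and> b = 0" using assms(2) unfolding vindep2_def by blast
qed

lemma is_pivot_act:
  assumes g: "invertible g" and L: "is_pivot L W"
  shows "is_pivot (act g L) ((*v) g ` W)"
proof -
  obtain h where h: "h ** g = mat 1" using g invertible_left_inverse by blast
  obtain u w where uw: "vindep2 u w" "W = vspan2 u w"
    using L unfolding is_pivot_def sub2_iff by blast
  have "sub2 ((*v) g ` W)"
    unfolding sub2_iff uw(2) image_vspan2 using vindep2_image[OF h uw(1)] by blast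
  moreover have "act g L \<subseteq> wedgeV ((*v) g ` W)"
    using L act_wedgeV[of g W] unfolding is_pivot_def act_def by blast
  ultimately show ?thesis unfolding is_pivot_def ..
qed

definition pluecker :: "vec6 \<Rightarrow> vec6 \<Rightarrow> 6 \<Rightarrow> 6 \<Rightarrow> complex" where
  "pluecker a b k l = a$k * b$l - a$l * b$k"

lemma pluecker_swap: "pluecker u w j i = - pluecker u w i j"
  by (simp add: pluecker_def)

lemma pluecker_diag: "pluecker u w i i = 0"
  by (simp add: pluecker_def)

lemma pluecker_nonzero:
  assumes "vindep2 u w" shows "\<exists>i j. pluecker u w i j \<noteq> 0"
proof (rule ccontr)
  assume "\<nexists>i j. pluecker u w i j \<noteq> 0"
  then have z: "u$i * w$j - u$j * w$i = 0" for i j unfolding pluecker_def by auto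
  show False
  proof (cases "u = 0")
    case True
    then have "1 *s u + 0 *s w = 0" by simp
    then show False using assms unfolding vindep2_def by (metis one_neq_zero)
  next
    case False
    then obtain k where k: "u$k \<noteq> 0" by (metis vec_eq_iff zero_index)
    have "(w$k) *s u + (- u$k) *s w = 0" using z[of k] by (simp add: vec_eq_iff)
    then show False using assms k unfolding vindep2_def by (metis neg_equal_0_iff_equal)
  qed
qed

text \<open>The \<open>(i, j, k, l)\<close>-coordinate of \<open>X \<and> a \<and> b \<in> \<And>\<^sup>4 V\<close>. It vanishes when
  \<open>X \<in> W \<and> V\<close> and \<open>a, b \<in> W\<close> for a plane \<open>W\<close>, since \<open>\<And>\<^sup>3 W = 0\<close>: this is how a pivot is
  recognised in coordinates.\<close>

definition wedge3_coord :: "mat6 \<Rightarrow> vec6 \<Rightarrow> vec6 \<Rightarrow> 6 \<Rightarrow> 6 \<Rightarrow> 6 \<Rightarrow> 6 \<Rightarrow> complex" where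
  "wedge3_coord X a b i j k l = X$i$j * pluecker a b k l - X$i$k * pluecker a b j l
     + X$i$l * pluecker a b j k + X$j$k * pluecker a b i l - X$j$l * pluecker a b i k
     + X$k$l * pluecker a b i j"

lemma wedge3_coord_lincomb:
  "wedge3_coord (smat x A + smat y B) a b i j k l
     = x * wedge3_coord A a b i j k l + y * wedge3_coord B a b i j k l"
  by (simp add: wedge3_coord_def algebra_simps)

lemma wedge3_coord_sum:
  "wedge3_coord (\<Sum>m<(n::nat). A m) a b i j k l = (\<Sum>m<n. wedge3_coord (A m) a b i j k l)"
  by (induct n) (simp_all add: wedge3_coord_def algebra_simps)

lemma wedge3_coord_wedgeV:
  assumes "X \<in> wedgeV (vspan2 u w)" "a \<in> vspan2 u w" "b \<in> vspan2 u w"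
  shows "wedge3_coord X a b i j k l = 0"
proof -
  obtain n y v where y: "\<forall>m<n. y m \<in> vspan2 u w" and X: "X = (\<Sum>m<(n::nat). wedge (y m) (v m))"
    using assms(1) unfolding wedgeV_def by blast
  obtain c2 d2 c3 d3 where ab: "a = c2 *s u + d2 *s w" "b = c3 *s u + d3 *s w"
    using assms(2,3) unfolding vspan2_def by blast
  have "wedge3_coord (wedge (y m) (v m)) a b i j k l = 0" if "m < n" for m
  proof -
    obtain c1 d1 where "y m = c1 *s u + d1 *s w" using y \<open>m < n\<close> unfolding vspan2_def by blast
    then show ?thesis unfolding ab by (simp add: wedge3_coord_def pluecker_def algebra_simps)
  qed
  then show ?thesis unfolding X wedge3_coord_sum by simp
qed

section \<open>The standard general line\<close>

definition line0_1 :: mat6 where "line0_1 = wedge (e 0) (e 2) + wedge (e 1) (e 3)"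
definition line0_2 :: mat6 where "line0_2 = wedge (e 0) (e 4) + wedge (e 1) (e 5)"

lemma line0_1_nth: "line0_1 $ i $ j = (if i = 0 \<and> j = 2 then 1 else if i = 2 \<and> j = 0 then -1 else
    if i = 1 \<and> j = 3 then 1 else if i = 3 \<and> j = 1 then -1 else 0)"
  by (auto simp: line0_1_def)

lemma line0_2_nth: "line0_2 $ i $ j = (if i = 0 \<and> j = 4 then 1 else if i = 4 \<and> j = 0 then -1 else
    if i = 1 \<and> j = 5 then 1 else if i = 5 \<and> j = 1 then -1 else 0)"
  by (auto simp: line0_2_def)

lemma skew_line0: "skew line0_1" "skew line0_2"
  by (simp_all add: line0_1_def line0_2_def skew_add skew_wedge)

lemma line0_span2: "line0 = span2 line0_1 line0_2"
  unfolding line0_def line0_1_def line0_2_def ..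

lemma line0_memI: "smat a line0_1 + smat b line0_2 \<in> line0"
  unfolding line0_span2 span2_def by blast

lemma line0_1_mem: "line0_1 \<in> line0"
  using line0_memI[of 1 0] by simp

lemma line0_2_mem: "line0_2 \<in> line0"
  using line0_memI[of 0 1] by simp

lemma indep2_line0: "indep2 line0_1 line0_2"
  unfolding indep2_def
proof (intro allI impI)
  fix a b assume "smat a line0_1 + smat b line0_2 = 0"
  then have "(smat a line0_1 + smat b line0_2) $ 0 $ 2 = 0"
    "(smat a line0_1 + smat b line0_2) $ 0 $ 4 = 0"
    by simp_all
  then show "a = 0 \<and> b = 0" by (simp add: line0_1_nth line0_2_nth)
qed

definition span_e01 :: "vec6 set" where
  "span_e01 = {x. x$2 = 0 \<and> x$3 = 0 \<and> x$4 = 0 \<and> x$5 = 0}"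

lemma span_e01_decomp: "p \<in> span_e01 \<Longrightarrow> p = p$0 *s e 0 + p$1 *s e 1"
  by (simp add: span_e01_def vec_eq_iff all_6)

lemma span_e01_nonzero:
  assumes "p \<in> span_e01" "p \<noteq> 0" shows "p$0 \<noteq> 0 \<or> p$1 \<noteq> 0"
proof (rule ccontr)
  assume "\<not> (p$0 \<noteq> 0 \<or> p$1 \<noteq> 0)"
  then have "p = 0" using span_e01_decomp[OF assms(1)] by simp
  then show False using assms(2) by simp
qed

lemma vspan2_eq_span_e01:
  assumes "u \<in> span_e01" "w \<in> span_e01" "pluecker u w 0 1 \<noteq> 0"
  shows "vspan2 u w = span_e01"
proof
  show "vspan2 u w \<subseteq> span_e01" using assms(1,2) unfolding vspan2_def span_e01_def by auto
next
  show "span_e01 \<subseteq> vspan2 u w"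
  proof
    fix x assume x: "x \<in> span_e01"
    define d where "d = pluecker u w 0 1"
    have d: "d \<noteq> 0" using assms(3) d_def by simp
    define a where "a = (x$0 * w$1 - x$1 * w$0) / d"
    define b where "b = (u$0 * x$1 - u$1 * x$0) / d"
    have "(x$0 * w$1 - x$1 * w$0) * u$0 + (u$0 * x$1 - u$1 * x$0) * w$0 = x$0 * d"
      "(x$0 * w$1 - x$1 * w$0) * u$1 + (u$0 * x$1 - u$1 * x$0) * w$1 = x$1 * d"
      unfolding d_def pluecker_def by (simp_all add: algebra_simps)
    then have "a * u$0 + b * w$0 = x$0" "a * u$1 + b * w$1 = x$1"
      using d unfolding a_def b_def by (simp_all add: field_simps)
    then have "x = a *s u + b *s w"
      using x assms(1,2) by (simp add: span_e01_def vec_eq_iff all_6)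
    then show "x \<in> vspan2 u w" unfolding vspan2_def by blast
  qed
qed

lemma pivot_line0_pluecker:
  assumes "line0_1 \<in> wedgeV (vspan2 u w)" "line0_2 \<in> wedgeV (vspan2 u w)"
  shows "pluecker u w 1 4 = 0" "pluecker u w 1 5 = 0" "pluecker u w 3 4 = 0"
    "pluecker u w 3 5 = 0" "pluecker u w 4 5 = 0" "pluecker u w 0 4 = 0" "pluecker u w 0 5 = 0"
    "pluecker u w 2 4 = 0" "pluecker u w 2 5 = 0" "pluecker u w 1 2 = 0" "pluecker u w 1 3 = 0"
    "pluecker u w 2 3 = 0" "pluecker u w 0 2 = 0" "pluecker u w 0 3 = 0"
proof -
  have q1: "wedge3_coord line0_1 u w i j k l = 0" and q2: "wedge3_coord line0_2 u w i j k l = 0"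
    for i j k l using wedge3_coord_wedgeV assms vspan2_left vspan2_right by blast+
  show "pluecker u w 1 4 = 0" "pluecker u w 1 5 = 0" "pluecker u w 3 4 = 0"
    "pluecker u w 3 5 = 0" "pluecker u w 4 5 = 0" "pluecker u w 0 4 = 0" "pluecker u w 0 5 = 0"
    "pluecker u w 2 4 = 0" "pluecker u w 2 5 = 0"
    using q1[of 0 2 1 4] q1[of 0 2 1 5] q1[of 0 2 3 4] q1[of 0 2 3 5] q1[of 0 2 4 5]
      q1[of 1 3 0 4] q1[of 1 3 0 5] q1[of 1 3 2 4] q1[of 1 3 2 5]
    by (simp_all add: wedge3_coord_def line0_1_nth pluecker_diag)
  show "pluecker u w 1 2 = 0" "pluecker u w 1 3 = 0" "pluecker u w 2 3 = 0"
    "pluecker u w 0 2 = 0" "pluecker u w 0 3 = 0"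
    using q2[of 0 4 1 2] q2[of 0 4 1 3] q2[of 0 4 2 3] q2[of 1 5 0 2] q2[of 1 5 0 3]
    by (simp_all add: wedge3_coord_def line0_2_nth pluecker_diag)
qed

lemma pivot_line0:
  assumes "line0_1 \<in> wedgeV (vspan2 u w)" "line0_2 \<in> wedgeV (vspan2 u w)" "vindep2 u w"
  shows "vspan2 u w = span_e01"
proof -
  note z = pivot_line0_pluecker[OF assms(1,2)]
  have nz: "pluecker u w 0 1 \<noteq> 0"
  proof
    assume "pluecker u w 0 1 = 0"
    then have "\<forall>i j. pluecker u w i j = 0"
      unfolding all_6 using z pluecker_diag[of u w]
        pluecker_swap[of u w 1 0] pluecker_swap[of u w 2 0] pluecker_swap[of u w 3 0]
        pluecker_swap[of u w 4 0] pluecker_swap[of u w 5 0] pluecker_swap[of u w 2 1]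
        pluecker_swap[of u w 3 1] pluecker_swap[of u w 4 1] pluecker_swap[of u w 5 1]
        pluecker_swap[of u w 3 2] pluecker_swap[of u w 4 2] pluecker_swap[of u w 5 2]
        pluecker_swap[of u w 4 3] pluecker_swap[of u w 5 3] pluecker_swap[of u w 5 4]
      by simp
    then show False using pluecker_nonzero[OF assms(3)] by blast
  qed
  have expand: "x$k * pluecker u w 0 1 = x$0 * (- pluecker u w 1 k) + x$1 * pluecker u w 0 k"
    if "x = u \<or> x = w" for x k using that by (auto simp: pluecker_def algebra_simps)
  have "x$2 * pluecker u w 0 1 = 0 \<and> x$3 * pluecker u w 0 1 = 0 \<and> x$4 * pluecker u w 0 1 = 0
      \<and> x$5 * pluecker u w 0 1 = 0" if "x = u \<or> x = w" for x
    unfolding expand[OF that] using z by simp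
  then have "u \<in> span_e01" "w \<in> span_e01" using nz unfolding span_e01_def by simp_all
  then show ?thesis using vspan2_eq_span_e01 nz by blast
qed

lemma exists_outside_span_e01:
  assumes "vindep2 u w" "vspan2 u w \<noteq> span_e01"
  obtains q where "q \<in> vspan2 u w" "q \<notin> span_e01"
proof -
  have "u \<notin> span_e01 \<or> w \<notin> span_e01"
  proof (rule ccontr)
    assume "\<not> (u \<notin> span_e01 \<or> w \<notin> span_e01)"
    then have uw: "u \<in> span_e01" "w \<in> span_e01" by auto
    have "pluecker u w 0 1 \<noteq> 0"
    proof
      assume "pluecker u w 0 1 = 0"
      then have "\<forall>i j. pluecker u w i j = 0"
        using uw unfolding all_6 by (simp add: span_e01_def pluecker_def algebra_simps)
      then show False using pluecker_nonzero[OF assms(1)] by blast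
    qed
    then show False using vspan2_eq_span_e01 uw assms(2) by blast
  qed
  then show ?thesis using that vspan2_left vspan2_right by blast
qed

text \<open>Write \<open>V = \<langle>e\<^sub>0, e\<^sub>1\<rangle> \<oplus> (\<complex>\<^sup>2 \<otimes> \<complex>\<^sup>2)\<close> with
  \<open>e\<^sub>2, e\<^sub>3, e\<^sub>4, e\<^sub>5 = \<epsilon>\<^sub>0\<otimes>f\<^sub>1, \<epsilon>\<^sub>1\<otimes>f\<^sub>1, \<epsilon>\<^sub>0\<otimes>f\<^sub>2, \<epsilon>\<^sub>1\<otimes>f\<^sub>2\<close>. Then \<open>line0\<close> consists of the tensors
  \<open>e\<^sub>0 \<and> (\<epsilon>\<^sub>0\<otimes>f) + e\<^sub>1 \<and> (\<epsilon>\<^sub>1\<otimes>f)\<close>, and \<open>tensor_vec x y a b = (x\<epsilon>\<^sub>0 + y\<epsilon>\<^sub>1) \<otimes> (af\<^sub>1 + bf\<^sub>2)\<close>.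
  The stabilizer of \<open>line0\<close> contains \<open>GL\<^sub>2\<close> acting on \<open>\<langle>e\<^sub>0, e\<^sub>1\<rangle>\<close> and contragrediently on
  the \<open>\<epsilon>\<close>-factor, \<open>GL\<^sub>2\<close> acting on the \<open>f\<close>-factor, and the shear \<open>e\<^sub>3 \<mapsto> e\<^sub>3 + k e\<^sub>1\<close>;
  \<open>line0_mover\<close> is a product of these, sending \<open>e\<^sub>0, e\<^sub>1\<close> to \<open>(p\<^sub>0, p\<^sub>1), (s\<^sub>0, s\<^sub>1)\<close> and
  \<open>f\<^sub>1, f\<^sub>2\<close> to \<open>(a, b), (c, d)\<close>.\<close>

definition tensor_vec :: "complex \<Rightarrow> complex \<Rightarrow> complex \<Rightarrow> complex \<Rightarrow> vec6" where
  "tensor_vec x y a b = (x * a) *s e 2 + (y * a) *s e 3 + (x * b) *s e 4 + (y * b) *s e 5"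

lemma wedge3_coord_line0:
  fixes a b :: complex and q :: vec6
  assumes "p \<in> span_e01" "k \<in> {2, 3, 4, 5}" "l \<in> {2, 3, 4, 5}"
  defines "r \<equiv> tensor_vec (- p$1) (p$0) a b"
  shows "wedge3_coord (smat a line0_1 + smat b line0_2) p q 0 1 k l = q$l * r$k - q$k * r$l"
  using assms(1-3) unfolding r_def
  by (auto simp: wedge3_coord_def pluecker_def span_e01_def line0_1_nth line0_2_nth
      tensor_vec_def algebra_simps)

lemma second_pivot_vector:
  assumes p: "p \<in> span_e01" "p \<noteq> 0" and q: "q \<notin> span_e01" and ab: "a \<noteq> 0 \<or> b \<noteq> 0"
    and coord: "\<And>k l. wedge3_coord (smat a line0_1 + smat b line0_2) p q 0 1 k l = 0"
  obtains lam where "lam \<noteq> 0" "q = q$0 *s e 0 + q$1 *s e 1 + lam *s tensor_vec (- p$1) (p$0) a b"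
proof -
  define r where "r = tensor_vec (- p$1) (p$0) a b"
  let ?S = "{2, 3, 4, 5} :: 6 set"
  have rel: "q$l * r$k = q$k * r$l" if "k \<in> ?S" "l \<in> ?S" for k l
    using wedge3_coord_line0[OF p(1) that, of a b q] coord[of k l] unfolding r_def by simp
  have "r$2 \<noteq> 0 \<or> r$3 \<noteq> 0 \<or> r$4 \<noteq> 0 \<or> r$5 \<noteq> 0"
    using span_e01_nonzero[OF p] ab by (auto simp: r_def tensor_vec_def)
  then obtain k0 where k0: "k0 \<in> ?S" "r$k0 \<noteq> 0" by blast
  define lam where "lam = q$k0 / r$k0"
  have ql: "q$l = lam * r$l" if "l \<in> ?S" for l
    using proportional_on[of ?S q r, OF rel k0 that] unfolding lam_def by blast
  have "q = q$0 *s e 0 + q$1 *s e 1 + lam *s r"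
    using ql by (simp add: vec_eq_iff all_6 r_def tensor_vec_def)
  moreover have "lam \<noteq> 0"
    using ql q by (auto simp: span_e01_def)
  ultimately show ?thesis using that unfolding r_def by blast
qed

definition line0_mover ::
    "complex \<Rightarrow> complex \<Rightarrow> complex \<Rightarrow> complex \<Rightarrow> complex \<Rightarrow> complex \<Rightarrow> complex \<Rightarrow> complex \<Rightarrow> complex \<Rightarrow> mat6"
  where "line0_mover p0 p1 s0 s1 a b c d k =
    cols6 (p0 *s e 0 + p1 *s e 1) (s0 *s e 0 + s1 *s e 1)
      (tensor_vec s1 (- s0) a b) (k *s (s0 *s e 0 + s1 *s e 1) + tensor_vec (- p1) p0 a b)
      (tensor_vec s1 (- s0) c d) (tensor_vec (- p1) p0 c d)"

lemma line0_mover_invertible: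
  assumes D: "p0 * s1 - p1 * s0 = 1" and E: "a * d - b * c \<noteq> 0"
  shows "invertible (line0_mover p0 p1 s0 s1 a b c d k)"
  unfolding line0_mover_def
proof (rule cols6_invertible)
  fix z :: vec6
  assume z: "z$0 *s (p0 *s e 0 + p1 *s e 1) + z$1 *s (s0 *s e 0 + s1 *s e 1)
    + z$2 *s tensor_vec s1 (- s0) a b
    + z$3 *s (k *s (s0 *s e 0 + s1 *s e 1) + tensor_vec (- p1) p0 a b)
    + z$4 *s tensor_vec s1 (- s0) c d + z$5 *s tensor_vec (- p1) p0 c d = 0" (is "?v = 0")
  have "?v $ i = 0" for i using z by simp
  from this[of 0] this[of 1] this[of 2] this[of 3] this[of 4] this[of 5] have c:
    "p0 * z$0 + s0 * (z$1 + k * z$3) = 0" "p1 * z$0 + s1 * (z$1 + k * z$3) = 0"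
    "s1 * (a * z$2 + c * z$4) + - p1 * (a * z$3 + c * z$5) = 0"
    "- s0 * (a * z$2 + c * z$4) + p0 * (a * z$3 + c * z$5) = 0"
    "s1 * (b * z$2 + d * z$4) + - p1 * (b * z$3 + d * z$5) = 0"
    "- s0 * (b * z$2 + d * z$4) + p0 * (b * z$3 + d * z$5) = 0"
    by (simp_all add: tensor_vec_def algebra_simps)
  have D': "s1 * p0 - - p1 * - s0 \<noteq> 0" "p0 * s1 - s0 * p1 \<noteq> 0"
    using D by (simp_all add: algebra_simps)
  have "a * z$2 + c * z$4 = 0" "a * z$3 + c * z$5 = 0"
    "b * z$2 + d * z$4 = 0" "b * z$3 + d * z$5 = 0"
    using cramer2_zero[OF D'(1) c(3,4)] cramer2_zero[OF D'(1) c(5,6)] by simp_all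
  moreover have "a * d - c * b \<noteq> 0" using E by (simp add: mult.commute)
  ultimately have "z$2 = 0" "z$4 = 0" "z$3 = 0" "z$5 = 0"
    using cramer2_zero[of a d c b] by blast+
  moreover have "z$0 = 0" "z$1 = 0"
    using cramer2_zero[OF D'(2) c(1,2)] \<open>z$3 = 0\<close> by simp_all
  ultimately show "z = 0" by (simp add: vec_eq_iff all_6)
qed

lemma congr_line0:
  "congr G line0_1 = wedge (G *v e 0) (G *v e 2) + wedge (G *v e 1) (G *v e 3)"
  "congr G line0_2 = wedge (G *v e 0) (G *v e 4) + wedge (G *v e 1) (G *v e 5)"
  by (simp_all add: line0_1_def line0_2_def congr_add congr_wedge)

lemma skew_line0_lincomb: "skew (smat a line0_1 + smat b line0_2)"
  by (simp add: skew_add skew_smat skew_line0)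

lemma line0_mover_line0:
  fixes p0 p1 s0 s1 a b c d k :: complex
  assumes D: "p0 * s1 - p1 * s0 = 1"
  defines "G \<equiv> line0_mover p0 p1 s0 s1 a b c d k"
  shows "congr G line0_1 = smat a line0_1 + smat b line0_2"
    and "congr G line0_2 = smat c line0_1 + smat d line0_2"
proof -
  have G: "G *v e 0 = p0 *s e 0 + p1 *s e 1" "G *v e 1 = s0 *s e 0 + s1 *s e 1"
    "G *v e 2 = tensor_vec s1 (- s0) a b"
    "G *v e 3 = k *s (s0 *s e 0 + s1 *s e 1) + tensor_vec (- p1) p0 a b"
    "G *v e 4 = tensor_vec s1 (- s0) c d" "G *v e 5 = tensor_vec (- p1) p0 c d"
    unfolding G_def line0_mover_def cols6_mult_e by simp_all
  show "congr G line0_1 = smat a line0_1 + smat b line0_2"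
    unfolding congr_line0 G
    by (rule skew_eqI[OF skew_add[OF skew_wedge skew_wedge] skew_line0_lincomb];
        simp add: line0_1_nth line0_2_nth tensor_vec_def algebra_simps; use D in algebra)
  show "congr G line0_2 = smat c line0_1 + smat d line0_2"
    unfolding congr_line0 G
    by (rule skew_eqI[OF skew_add[OF skew_wedge skew_wedge] skew_line0_lincomb];
        simp add: line0_1_nth line0_2_nth tensor_vec_def algebra_simps; use D in algebra)
qed

lemma line0_stabilizer_transitive:
  assumes p: "p0 \<noteq> 0 \<or> p1 \<noteq> 0" and ab: "a \<noteq> 0 \<or> b \<noteq> 0" and lam: "lam \<noteq> 0"
  obtains G where "invertible G" "congr G line0_1 \<in> line0" "congr G line0_2 \<in> line0"
    "G *v e 0 = p0 *s e 0 + p1 *s e 1"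
    "G *v e 3 \<in> vspan2 (p0 *s e 0 + p1 *s e 1)
                        (q0 *s e 0 + q1 *s e 1 + lam *s tensor_vec (- p1) p0 a b)"
proof -
  obtain s0 s1 where D: "p0 * s1 - p1 * s0 = 1" using exists_det_eq_1[OF p] .
  obtain c d where "a * d - b * c = 1" using exists_det_eq_1[OF ab] .
  then have E: "a * d - b * c \<noteq> 0" by simp
  \<comment> \<open>\<open>k\<close> is chosen so that \<open>G e\<^sub>3 - q / lam\<close> is a multiple of \<open>p\<close>.\<close>
  define k where "k = (p0 * q1 - p1 * q0) / lam"
  define G where "G = line0_mover p0 p1 s0 s1 a b c d k"
  have "G *v e 3 = ((q1 * s0 - q0 * s1) / lam) *s (p0 *s e 0 + p1 *s e 1)
      + (1 / lam) *s (q0 *s e 0 + q1 *s e 1 + lam *s tensor_vec (- p1) p0 a b)"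
    unfolding G_def line0_mover_def cols6_mult_e vec_eq_iff all_6
    using lam by (intro conjI; simp add: k_def tensor_vec_def field_simps; use D in algebra)
  then have "G *v e 3 \<in> vspan2 (p0 *s e 0 + p1 *s e 1)
                        (q0 *s e 0 + q1 *s e 1 + lam *s tensor_vec (- p1) p0 a b)"
    unfolding vspan2_def by blast
  moreover have "G *v e 0 = p0 *s e 0 + p1 *s e 1"
    unfolding G_def line0_mover_def cols6_mult_e ..
  moreover have "invertible G" unfolding G_def using line0_mover_invertible[OF D E] .
  ultimately show ?thesis
    using that line0_mover_line0[OF D] line0_memI unfolding G_def by metis
qed

section \<open>The normal form\<close>

text \<open>For skew \<open>N\<close> this says \<open>N \<in> \<langle>e\<^sub>0, e\<^sub>3\<rangle> \<and> V\<close>.\<close>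

definition vanishes_off_03 :: "mat6 \<Rightarrow> bool" where
  "vanishes_off_03 N \<longleftrightarrow>
     N$1$2 = 0 \<and> N$1$4 = 0 \<and> N$1$5 = 0 \<and> N$2$4 = 0 \<and> N$2$5 = 0 \<and> N$4$5 = 0"

lemma wedgeV_vanishes_off_03:
  assumes "Y \<in> wedgeV (vspan2 u w)" "e 0 \<in> vspan2 u w" "e 3 \<in> vspan2 u w"
  shows "vanishes_off_03 Y"
proof -
  have "wedge3_coord Y (e 0) (e 3) i j k l = 0" for i j k l
    using wedge3_coord_wedgeV[OF assms] .
  from this[of 1 2 0 3] this[of 1 4 0 3] this[of 1 5 0 3] this[of 2 4 0 3] this[of 2 5 0 3]
    this[of 4 5 0 3]
  show ?thesis by (simp add: vanishes_off_03_def wedge3_coord_def pluecker_def)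
qed

lemma injective_skew_criterion:
  assumes sk: "skew X"
    and z: "X$1$2 = 0" "X$1$4 = 0" "X$2$4 = 0" "X$2$5 = 0" "X$4$5 = 0"
    and n15: "X$1$5 \<noteq> 0" and D: "X$0$2 * X$3$4 + X$0$4 * X$2$3 \<noteq> 0"
  shows "\<forall>v. X *v v = 0 \<longrightarrow> v = 0"
proof (intro allI impI)
  fix v assume "X *v v = 0"
  then have eq: "(\<Sum>j\<in>UNIV. X$i$j * v$j) = 0" for i
    by (simp add: matrix_vector_mult_def vec_eq_iff)
  note dg = skew_diag[OF sk] and sw = skew_nth[OF sk]
  have e0: "X$0$1 * v$1 + X$0$2 * v$2 + X$0$3 * v$3 + X$0$4 * v$4 + X$0$5 * v$5 = 0"
    using eq[of 0] by (simp add: sum_UNIV_6 dg)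
  have e1: "- X$0$1 * v$0 + X$1$3 * v$3 + X$1$5 * v$5 = 0"
    using eq[of 1] by (simp add: sum_UNIV_6 dg z sw[of 1 0])
  have e2: "- X$0$2 * v$0 + X$2$3 * v$3 = 0"
    using eq[of 2] by (simp add: sum_UNIV_6 dg z sw[of 2 0] sw[of 2 1])
  have e3: "- X$0$3 * v$0 - X$1$3 * v$1 - X$2$3 * v$2 + X$3$4 * v$4 + X$3$5 * v$5 = 0"
    using eq[of 3] by (simp add: sum_UNIV_6 dg z sw[of 3 0] sw[of 3 1] sw[of 3 2])
  have e4: "- X$0$4 * v$0 - X$3$4 * v$3 = 0"
    using eq[of 4] by (simp add: sum_UNIV_6 dg z sw[of 4 0] sw[of 4 1] sw[of 4 2] sw[of 4 3])
  have e5: "- X$0$5 * v$0 - X$1$5 * v$1 - X$3$5 * v$3 = 0"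
    using eq[of 5]
    by (simp add: sum_UNIV_6 dg z sw[of 5 0] sw[of 5 1] sw[of 5 2] sw[of 5 3] sw[of 5 4])
  have D': "(- X$0$2) * (- X$3$4) - X$2$3 * (- X$0$4) \<noteq> 0" "X$0$2 * X$3$4 - X$0$4 * (- X$2$3) \<noteq> 0"
    using D by (simp_all add: algebra_simps)
  have "v$0 = 0" "v$3 = 0" using cramer2_zero[OF D'(1) e2] e4 by simp_all
  moreover have "v$5 = 0" "v$1 = 0" using e1 e5 n15 \<open>v$0 = 0\<close> \<open>v$3 = 0\<close> by simp_all
  moreover have "X$0$2 * v$2 + X$0$4 * v$4 = 0" "- X$2$3 * v$2 + X$3$4 * v$4 = 0"
    using e0 e3 calculation by simp_all
  then have "v$2 = 0" "v$4 = 0" using cramer2_zero[OF D'(2)] by blast+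
  ultimately show "v = 0" by (simp add: vec_eq_iff all_6)
qed

lemma skew_plane_elt: "skew N \<Longrightarrow> skew (smat a line0_1 + smat b line0_2 + smat c N)"
  by (simp add: skew_add skew_smat skew_line0)

lemma singular_plane_entry_34:
  assumes sk: "skew N" and N: "vanishes_off_03 N" and S: "all_singular (span3 line0_1 line0_2 N)"
  shows "N$3$4 = 0"
proof (rule ccontr)
  assume h: "N$3$4 \<noteq> 0"
  define a where "a = - N$0$2 + (1 - (1 + N$0$4) * N$2$3) / N$3$4"
  let ?X = "smat a line0_1 + smat 1 line0_2 + smat 1 N"
  have "\<forall>v. ?X *v v = 0 \<longrightarrow> v = 0"
  proof (rule injective_skew_criterion)
    show "skew ?X" using sk by (rule skew_plane_elt)
    show "?X$1$2 = 0" "?X$1$4 = 0" "?X$2$4 = 0" "?X$2$5 = 0" "?X$4$5 = 0" "?X$1$5 \<noteq> 0"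
      using N by (simp_all add: vanishes_off_03_def line0_1_nth line0_2_nth)
    have "?X$0$2 * ?X$3$4 + ?X$0$4 * ?X$2$3 = (a + N$0$2) * N$3$4 + (1 + N$0$4) * N$2$3"
      by (simp add: line0_1_nth line0_2_nth)
    also have "\<dots> = 1" using h by (simp add: a_def field_simps)
    finally show "?X$0$2 * ?X$3$4 + ?X$0$4 * ?X$2$3 \<noteq> 0" by simp
  qed
  then show False using S span3_memI unfolding all_singular_def by blast
qed

lemma singular_plane_entry_23:
  assumes sk: "skew N" and N: "vanishes_off_03 N" and S: "all_singular (span3 line0_1 line0_2 N)"
    and n34: "N$3$4 = 0"
  shows "N$2$3 = 0"
proof (rule ccontr)
  assume h: "N$2$3 \<noteq> 0"
  define b where "b = (if N$0$4 = -1 then 2 else (1::complex))"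
  have b: "b \<noteq> 0" "b + N$0$4 \<noteq> 0" unfolding b_def by (auto simp: add_eq_0_iff)
  let ?X = "smat 0 line0_1 + smat b line0_2 + smat 1 N"
  have "\<forall>v. ?X *v v = 0 \<longrightarrow> v = 0"
  proof (rule injective_skew_criterion)
    show "skew ?X" using sk by (rule skew_plane_elt)
    show "?X$1$2 = 0" "?X$1$4 = 0" "?X$2$4 = 0" "?X$2$5 = 0" "?X$4$5 = 0" "?X$1$5 \<noteq> 0"
      using N b by (simp_all add: vanishes_off_03_def line0_1_nth line0_2_nth)
    have "?X$0$2 * ?X$3$4 + ?X$0$4 * ?X$2$3 = (b + N$0$4) * N$2$3"
      by (simp add: line0_1_nth line0_2_nth n34)
    then show "?X$0$2 * ?X$3$4 + ?X$0$4 * ?X$2$3 \<noteq> 0" using h b by simp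
  qed
  then show False using S span3_memI unfolding all_singular_def by blast
qed

lemma wedge_free_plane_entry_35:
  assumes sk: "skew N" and N: "vanishes_off_03 N" and W: "wedge_free (span3 line0_1 line0_2 N)"
    and ind: "indep3 line0_1 line0_2 N" and n34: "N$3$4 = 0" and n23: "N$2$3 = 0"
  shows "N$3$5 \<noteq> 0"
proof
  assume h: "N$3$5 = 0"
  let ?X = "smat (- N$1$3) line0_1 + smat 0 line0_2 + smat 1 N"
  have "?X = wedge (e 0) (\<chi> k. ?X $ 0 $ k)"
    by (rule skew_eqI[OF skew_plane_elt[OF sk] skew_wedge])
      (use N in \<open>simp_all add: vanishes_off_03_def line0_1_nth line0_2_nth n34 n23 h\<close>)
  then have "?X = 0" using W span3_memI unfolding wedge_free_def by metis
  then show False using ind one_neq_zero unfolding indep3_def by blast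
qed

definition plane_invariant :: "mat6 \<Rightarrow> complex" where
  "plane_invariant N = N$0$1 * N$3$5 + N$0$3 * N$0$4 + N$0$5 * (N$1$3 - N$0$2)"

lemma wedge_free_plane_invariant:
  assumes sk: "skew N" and N: "vanishes_off_03 N" and W: "wedge_free (span3 line0_1 line0_2 N)"
    and ind: "indep3 line0_1 line0_2 N" and n34: "N$3$4 = 0" and n23: "N$2$3 = 0"
    and n35: "N$3$5 \<noteq> 0"
  shows "plane_invariant N \<noteq> 0"
proof
  assume "plane_invariant N = 0"
  then have n01: "N$0$1 = - (N$0$3 * N$0$4 + N$0$5 * (N$1$3 - N$0$2)) / N$3$5"
    using n35 by (simp add: plane_invariant_def field_simps add_eq_0_iff)
  let ?X = "smat (- N$0$2) line0_1 + smat (- N$0$4) line0_2 + smat 1 N"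
  define u where "u = (- N$0$4 / N$3$5) *s e 1 + e 3 + (N$0$5 / N$3$5) *s e 0"
  define w where "w = N$3$5 *s e 5 - (N$1$3 - N$0$2) *s e 1 - N$0$3 *s e 0"
  have "?X = wedge u w"
    by (rule skew_eqI[OF skew_plane_elt[OF sk] skew_wedge])
      (use N n35 in \<open>simp_all add: vanishes_off_03_def line0_1_nth line0_2_nth n34 n23
        u_def w_def n01 field_simps\<close>)
  then have "?X = 0" using W span3_memI unfolding wedge_free_def by metis
  then show False using ind one_neq_zero unfolding indep3_def by blast
qed

definition plane_p_1 :: mat6 where "plane_p_1 = wedge (e 0) (e 3) + wedge (e 1) (e 2)"
definition plane_p_2 :: mat6 where "plane_p_2 = wedge (e 0) (e 4) + wedge (e 2) (e 3)"
definition plane_p_3 :: mat6 where "plane_p_3 = wedge (e 0) (e 5) + wedge (e 1) (e 3)"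

lemma plane_p_span3: "plane_p = span3 plane_p_1 plane_p_2 plane_p_3"
  by (simp add: plane_p_def plane_p_1_def plane_p_2_def plane_p_3_def)

lemma indep3_plane_p: "indep3 plane_p_1 plane_p_2 plane_p_3"
  unfolding indep3_def
proof (intro allI impI)
  fix a b c assume h: "smat a plane_p_1 + smat b plane_p_2 + smat c plane_p_3 = 0"
  have "(smat a plane_p_1 + smat b plane_p_2 + smat c plane_p_3) $ 0 $ i = 0" for i
    using h by simp
  from this[of 3] this[of 4] this[of 5] show "a = 0 \<and> b = 0 \<and> c = 0"
    by (simp add: plane_p_1_def plane_p_2_def plane_p_3_def)
qed

definition plane_normalizer :: "mat6 \<Rightarrow> mat6" where
  "plane_normalizer N =
    (let a = N$1$3 - N$0$2; b = - N$0$4; c = N$3$5; k = plane_invariant N in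
     cols6 (e 0) ((b / c) *s e 1 + e 3) ((- a) *s e 1 + c *s e 5)
       (N$0$1 *s e 1 + N$0$3 *s e 3 + N$0$5 *s e 5)
       ((- N$0$3 * N$0$1) *s e 1 + (- N$0$3 * N$0$3) *s e 3 + (- k) *s e 4
          + (- N$0$3 * N$0$5) *s e 5)
       ((N$0$5 * N$0$1 / c) *s e 1 + (- k / c) *s e 2 + (N$0$5 * N$0$3 / c) *s e 3
          + (N$0$5 * N$0$5 / c) *s e 5))"

lemma plane_normalizer_invertible:
  assumes c: "N$3$5 \<noteq> 0" and k: "plane_invariant N \<noteq> 0"
  shows "invertible (plane_normalizer N)"
  unfolding plane_normalizer_def Let_def
proof (rule cols6_invertible)
  fix z :: vec6
  let ?a = "N$1$3 - N$0$2" and ?b = "- N$0$4" and ?c = "N$3$5" and ?k = "plane_invariant N"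
  assume "z$0 *s e 0 + z$1 *s ((?b / ?c) *s e 1 + e 3) + z$2 *s ((- ?a) *s e 1 + ?c *s e 5)
    + z$3 *s (N$0$1 *s e 1 + N$0$3 *s e 3 + N$0$5 *s e 5)
    + z$4 *s ((- N$0$3 * N$0$1) *s e 1 + (- N$0$3 * N$0$3) *s e 3 + (- ?k) *s e 4
        + (- N$0$3 * N$0$5) *s e 5)
    + z$5 *s ((N$0$5 * N$0$1 / ?c) *s e 1 + (- ?k / ?c) *s e 2 + (N$0$5 * N$0$3 / ?c) *s e 3
        + (N$0$5 * N$0$5 / ?c) *s e 5) = 0" (is "?v = 0")
  then have v: "?v $ i = 0" for i by simp
  have "z$0 = 0" "z$5 = 0" "z$4 = 0" using v[of 0] v[of 2] v[of 4] c k by simp_all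
  moreover have z1: "z$1 = - N$0$3 * z$3" and z2: "z$2 = - N$0$5 * z$3 / ?c"
    using v[of 3] v[of 5] c \<open>z$4 = 0\<close> \<open>z$5 = 0\<close> by (simp_all add: field_simps add_eq_0_iff)
  moreover have "?b / ?c * z$1 - ?a * z$2 + N$0$1 * z$3 = 0"
    using v[of 1] \<open>z$4 = 0\<close> \<open>z$5 = 0\<close> by (simp add: algebra_simps)
  then have "?k / ?c * z$3 = 0"
    unfolding z1 z2 using c by (simp add: plane_invariant_def field_simps)
  then have "z$3 = 0" using c k by simp
  ultimately show "z = 0" by (simp add: vec_eq_iff all_6)
qed

lemma plane_normalizer_plane_p:
  assumes sk: "skew N" and N: "vanishes_off_03 N" and n34: "N$3$4 = 0" and n23: "N$2$3 = 0"
    and n35: "N$3$5 \<noteq> 0"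
  defines "F \<equiv> plane_normalizer N" and "a \<equiv> N$1$3 - N$0$2" and "b \<equiv> - N$0$4" and "c \<equiv> N$3$5"
  shows "congr F plane_p_1 = smat (- N$0$2) line0_1 + smat (- N$0$4) line0_2 + smat 1 N"
    and "congr F plane_p_2 = smat (- a * N$0$3 + N$0$3 * N$1$3) line0_1
           + smat (- c * N$0$1 - a * N$0$5) line0_2 + smat (- N$0$3) N"
    and "congr F plane_p_3 = smat (- N$0$1 + b * N$0$3 / c - N$0$5 * N$1$3 / c) line0_1
           + smat (b * N$0$5 / c) line0_2 + smat (N$0$5 / c) N"
proof -
  note F = plane_normalizer_def Let_def plane_invariant_def cols6_mult_e
  note entries = line0_1_nth line0_2_nth n34 n23 n35 a_def b_def c_def
  have skew_rhs: "skew (wedge u v + wedge w x)" for u v w x by (simp add: skew_add skew_wedge)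
  show "congr F plane_p_1 = smat (- N$0$2) line0_1 + smat (- N$0$4) line0_2 + smat 1 N"
    unfolding F_def plane_p_1_def congr_add congr_wedge F
    by (rule skew_eqI[OF skew_rhs skew_plane_elt[OF sk]])
      (use N in \<open>simp_all add: vanishes_off_03_def entries field_simps\<close>)
  show "congr F plane_p_2 = smat (- a * N$0$3 + N$0$3 * N$1$3) line0_1
      + smat (- c * N$0$1 - a * N$0$5) line0_2 + smat (- N$0$3) N"
    unfolding F_def plane_p_2_def congr_add congr_wedge F
    by (rule skew_eqI[OF skew_rhs skew_plane_elt[OF sk]])
      (use N in \<open>simp_all add: vanishes_off_03_def entries field_simps\<close>)
  show "congr F plane_p_3 = smat (- N$0$1 + b * N$0$3 / c - N$0$5 * N$1$3 / c) line0_1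
      + smat (b * N$0$5 / c) line0_2 + smat (N$0$5 / c) N"
    unfolding F_def plane_p_3_def congr_add congr_wedge F
    by (rule skew_eqI[OF skew_rhs skew_plane_elt[OF sk]])
      (use N in \<open>simp_all add: vanishes_off_03_def entries field_simps\<close>)
qed

lemma pgl_equiv_normal_form:
  assumes sk: "skew N" and N: "vanishes_off_03 N" and ind: "indep3 line0_1 line0_2 N"
    and W: "wedge_free (span3 line0_1 line0_2 N)" and S: "all_singular (span3 line0_1 line0_2 N)"
  shows "pgl_equiv (span3 line0_1 line0_2 N) plane_p"
proof -
  have n34: "N$3$4 = 0" using singular_plane_entry_34[OF sk N S] .
  have n23: "N$2$3 = 0" using singular_plane_entry_23[OF sk N S n34] .
  have n35: "N$3$5 \<noteq> 0" using wedge_free_plane_entry_35[OF sk N W ind n34 n23] .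
  have k: "plane_invariant N \<noteq> 0" using wedge_free_plane_invariant[OF sk N W ind n34 n23 n35] .
  define F where "F = plane_normalizer N"
  have F: "invertible F" unfolding F_def using plane_normalizer_invertible[OF n35 k] .
  then obtain H where H: "H ** F = mat 1" using invertible_left_inverse by blast
  have "act F plane_p = span3 (congr F plane_p_1) (congr F plane_p_2) (congr F plane_p_3)"
    unfolding plane_p_span3 act_span3 ..
  also have "\<dots> = span3 line0_1 line0_2 N"
    using plane_normalizer_plane_p[OF sk N n34 n23 n35] indep3_congr[OF H indep3_plane_p]
    by (intro span3_eq) (simp_all only: F_def span3_memI)
  finally show ?thesis using pgl_equiv_act[OF F] pgl_equiv_sym by metis
qed

lemma pgl_equiv_plane_through_line0:
  assumes Q: "rank4_plane Q" "line0_1 \<in> Q" "line0_2 \<in> Q"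
    and Y: "Y1 \<in> Q" "Y2 \<in> Q" "indep2 Y1 Y2" "vanishes_off_03 Y1" "vanishes_off_03 Y2"
  shows "pgl_equiv Q plane_p"
proof -
  have "Y1 \<notin> line0 \<or> Y2 \<notin> line0"
  proof (rule ccontr)
    assume "\<not> (Y1 \<notin> line0 \<or> Y2 \<notin> line0)"
    then obtain a1 b1 a2 b2 where
      y: "Y1 = smat a1 line0_1 + smat b1 line0_2" "Y2 = smat a2 line0_1 + smat b2 line0_2"
      unfolding line0_span2 span2_def by blast
    have "b1 = 0" "b2 = 0"
      using Y(4,5) unfolding y by (simp_all add: vanishes_off_03_def line0_1_nth line0_2_nth)
    then have "smat a2 Y1 + smat (- a1) Y2 = 0" unfolding y by (simp add: vec_eq_iff)
    then have "a1 = 0" using Y(3) unfolding indep2_def by (metis neg_equal_0_iff_equal)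
    then have "smat 1 Y1 + smat 0 Y2 = 0" unfolding y \<open>b1 = 0\<close> by simp
    then show False using Y(3) one_neq_zero unfolding indep2_def by blast
  qed
  then obtain N where N: "N \<in> {Y1, Y2}" "N \<notin> line0" by blast
  have ind: "indep3 line0_1 line0_2 N"
    using indep3_of_notin_span2[OF indep2_line0] N(2) by (simp add: line0_span2)
  have QN: "Q = span3 line0_1 line0_2 N"
    using rank4_plane_span3[OF Q(1,2,3) _ ind] N(1) Y(1,2) by blast
  show ?thesis
    using pgl_equiv_normal_form[OF _ _ ind] Q(1) N(1) Y rank4_plane_skew
    unfolding QN rank4_plane_def by blast
qed

section \<open>Planes with two pivots through a point\<close>

lemma line0_stabilizer_second_pivot:
  assumes P: "rank4_plane P" "line0 \<subseteq> P" and W1: "line0 \<subseteq> wedgeV W1" "sub2 W1"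
    and Y: "Y1 \<in> P" "Y2 \<in> P" "indep2 Y1 Y2" "Y1 \<in> wedgeV W2" "Y2 \<in> wedgeV W2" "sub2 W2"
    and W: "W1 \<noteq> W2" "p \<noteq> 0" "p \<in> W1" "p \<in> W2"
  obtains G where "invertible G" "congr G line0_1 \<in> line0" "congr G line0_2 \<in> line0"
    "G *v e 0 \<in> W2" "G *v e 3 \<in> W2"
proof -
  obtain u1 w1 u2 w2
    where uw: "vindep2 u1 w1" "W1 = vspan2 u1 w1" "vindep2 u2 w2" "W2 = vspan2 u2 w2"
    using W1(2) Y(6) unfolding sub2_iff by blast
  have W1_std: "W1 = span_e01"
    using pivot_line0 W1(1) line0_1_mem line0_2_mem uw(1,2) by blast
  obtain q where q: "q \<in> W2" "q \<notin> span_e01"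
    using exists_outside_span_e01[OF uw(3)] W W1_std uw(4) by metis
  have p: "p \<in> span_e01" using W(3) W1_std by simp
  obtain A B C where ABC: "P = span3 A B C"
    using P(1) unfolding rank4_plane_def proj_plane_def by blast
  have "line0_1 \<in> span3 A B C" "line0_2 \<in> span3 A B C" "Y1 \<in> span3 A B C" "Y2 \<in> span3 A B C"
    using P(2) line0_1_mem line0_2_mem Y(1,2) unfolding ABC by blast+
  then obtain a b c d where ab: "a \<noteq> 0 \<or> b \<noteq> 0"
    and M: "smat a line0_1 + smat b line0_2 = smat c Y1 + smat d Y2"
    using Y(3) by (rule span3_meets_span2)
  have "wedge3_coord (smat a line0_1 + smat b line0_2) p q 0 1 k l = 0" for k l
    unfolding M wedge3_coord_lincomb
    using wedge3_coord_wedgeV Y(4,5) W(4) q(1) unfolding uw(4) by simp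
  then obtain lam where lam: "lam \<noteq> 0"
    and q_eq: "q = q$0 *s e 0 + q$1 *s e 1 + lam *s tensor_vec (- p$1) (p$0) a b"
    using second_pivot_vector[OF p W(2) q(2) ab] by blast
  obtain G where G: "invertible G" "congr G line0_1 \<in> line0" "congr G line0_2 \<in> line0"
    "G *v e 0 = p$0 *s e 0 + p$1 *s e 1"
    "G *v e 3 \<in> vspan2 (p$0 *s e 0 + p$1 *s e 1)
                        (q$0 *s e 0 + q$1 *s e 1 + lam *s tensor_vec (- p$1) (p$0) a b)"
    using line0_stabilizer_transitive[OF span_e01_nonzero[OF p W(2)] ab lam] by blast
  have "G *v e 0 = p" "G *v e 3 \<in> vspan2 p q"
    using G(4,5) unfolding span_e01_decomp[OF p, symmetric] q_eq[symmetric] by simp_all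
  moreover have "vspan2 p q \<subseteq> W2" using vspan2_subset W(4) q(1) unfolding uw(4) by blast
  ultimately show ?thesis using that G(1-3) W(4) by blast
qed

lemma pgl_equiv_two_pivots:
  assumes P: "rank4_plane P" "line0 \<subseteq> P" and W1: "line0 \<subseteq> wedgeV W1" "sub2 W1"
    and Y: "Y1 \<in> P" "Y2 \<in> P" "indep2 Y1 Y2" "Y1 \<in> wedgeV W2" "Y2 \<in> wedgeV W2" "sub2 W2"
    and W: "W1 \<noteq> W2" "p \<noteq> 0" "p \<in> W1" "p \<in> W2"
  shows "pgl_equiv P plane_p"
proof -
  obtain G where G: "invertible G" "congr G line0_1 \<in> line0" "congr G line0_2 \<in> line0"
    "G *v e 0 \<in> W2" "G *v e 3 \<in> W2"
    using line0_stabilizer_second_pivot[OF assms] by blast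
  obtain H where GH: "G ** H = mat 1" "H ** G = mat 1" using G(1) unfolding invertible_def by blast
  have H: "invertible H" using GH unfolding invertible_def by blast
  obtain u w where W2: "W2 = vspan2 u w" using Y(6) unfolding sub2_iff by blast
  have HG: "H *v (G *v x) = x" for x by (simp add: matrix_vector_mul_assoc GH(2))
  have e03: "e 0 \<in> vspan2 (H *v u) (H *v w)" "e 3 \<in> vspan2 (H *v u) (H *v w)"
    using G(4,5) HG unfolding W2 image_vspan2[symmetric] by (metis image_eqI)+
  have "congr H (congr G line0_1) \<in> act H P" "congr H (congr G line0_2) \<in> act H P"
    using G(2,3) P(2) unfolding act_def by blast+
  then have "line0_1 \<in> act H P" "line0_2 \<in> act H P"
    by (simp_all only: congr_cancel[OF GH(2)])
  moreover have "congr H Y1 \<in> act H P" "congr H Y2 \<in> act H P"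
    using Y(1,2) unfolding act_def by blast+
  moreover have "vanishes_off_03 (congr H Y1)" "vanishes_off_03 (congr H Y2)"
    using Y(4,5) act_wedgeV[of H W2] e03 wedgeV_vanishes_off_03
    unfolding W2 image_vspan2 act_def by blast+
  ultimately have "pgl_equiv (act H P) plane_p"
    using pgl_equiv_plane_through_line0 rank4_plane_act[OF H P(1)] indep2_congr[OF GH(1) Y(3)]
    by blast
  then show ?thesis using pgl_equiv_trans pgl_equiv_act[OF H] by blast
qed

lemma pgl_equiv_line0_pivot:
  assumes P: "rank4_plane P" "line0 \<subseteq> P" and W1: "is_pivot line0 W1"
    and L2: "pgl_equiv line0 L2" "L2 \<subseteq> P" "is_pivot L2 W2"
    and W: "W1 \<noteq> W2" "p \<noteq> 0" "p \<in> W1" "p \<in> W2"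
  shows "pgl_equiv P plane_p"
proof -
  obtain g where g: "invertible g" "act g line0 = L2" using L2(1) unfolding pgl_equiv_def by blast
  then obtain h where "h ** g = mat 1" using invertible_left_inverse by blast
  then have "indep2 (congr g line0_1) (congr g line0_2)" by (rule indep2_congr) (rule indep2_line0)
  moreover have "congr g line0_1 \<in> L2" "congr g line0_2 \<in> L2"
    using g(2) line0_1_mem line0_2_mem unfolding act_def by blast+
  ultimately show ?thesis
    using W1 L2(2,3) unfolding is_pivot_def
    by (intro pgl_equiv_two_pivots[OF P _ _ _ _ _ _ _ _ W]) auto
qed

theorem mainTheorem8:
  fixes P :: "mat6 set"
  assumes plane: "proj_plane P"
    and rank4: "all_rank4 P"
    and common_point: "\<exists>p::vec6. p \<noteq> 0 \<and>
          (\<forall>L W. general_line L \<and> L \<subseteq> P \<and> is_pivot L W \<longrightarrow> p \<in> W)"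
    and not_all_equal: "\<exists>L1 L2 W1 W2. general_line L1 \<and> L1 \<subseteq> P \<and> is_pivot L1 W1 \<and>
          general_line L2 \<and> L2 \<subseteq> P \<and> is_pivot L2 W2 \<and> W1 \<noteq> W2"
  shows "pgl_equiv P plane_p"
proof -
  obtain p where p: "p \<noteq> 0" "\<And>L W. general_line L \<Longrightarrow> L \<subseteq> P \<Longrightarrow> is_pivot L W \<Longrightarrow> p \<in> W"
    using common_point by blast
  obtain L1 L2 W1 W2 where L: "general_line L1" "L1 \<subseteq> P" "is_pivot L1 W1"
    "general_line L2" "L2 \<subseteq> P" "is_pivot L2 W2" "W1 \<noteq> W2"
    using not_all_equal by blast
  obtain g where g: "invertible g" "act g line0 = L1"
    using L(1) unfolding general_line_def pgl_equiv_def by blast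
  then obtain h where gh: "g ** h = mat 1" "h ** g = mat 1" unfolding invertible_def by blast
  then have h: "invertible h" unfolding invertible_def by blast
  have ghW: "(*v) g ` (*v) h ` W = W" for W
    by (simp add: image_image matrix_vector_mul_assoc gh(1))
  have "pgl_equiv (act h P) plane_p"
  proof (rule pgl_equiv_line0_pivot)
    show "rank4_plane (act h P)" using h plane rank4 by (simp add: rank4_plane_act rank4_planeI)
    show "line0 \<subseteq> act h P" "act h L2 \<subseteq> act h P"
      using L(2,5) act_cancel[OF gh(2)] g(2) unfolding act_def by blast+
    show "is_pivot line0 ((*v) h ` W1)" "is_pivot (act h L2) ((*v) h ` W2)"
      using is_pivot_act[OF h] L(3,6) act_cancel[OF gh(2)] g(2) by metis+
    show "pgl_equiv line0 (act h L2)"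
      using L(4) pgl_equiv_trans pgl_equiv_act[OF h] unfolding general_line_def by blast
    show "(*v) h ` W1 \<noteq> (*v) h ` W2" using L(7) ghW by metis
    show "h *v p \<noteq> 0" using p(1) by (metis gh(1) matrix_vector_mul_assoc matrix_vector_mul_lid
        matrix_vector_mult_0_right)
    show "h *v p \<in> (*v) h ` W1" "h *v p \<in> (*v) h ` W2" using p(2) L by blast+
  qed
  then show ?thesis using pgl_equiv_trans pgl_equiv_act[OF h] by blast
qed

end
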